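(* Let $(X,d_X)$ be a discrete countable metric space and $A\subset X$ nonempty. Let $X_0,X_1$ be two copies of $X$ (the copy of $x\in X$ in $X_i$ denoted $x_i$), and define the metric $d^A$ on $X_0\sqcup X_1$ by $d^A(x_i,y_i)=d_X(x,y)$ for $i=0,1$ and $d^A(x_0,y_1)=\inf_{z\in A}[d_X(x,z)+d_X(y,z)+1]$. Identifying $\mathbb B(H_{X_0},H_{X_1})$ with $\mathbb B(H_X)$, the module $M_{X_1,d^A}$ (with $X_0$ playing the role of $X$) coincides with the norm closure in $\mathbb B(H_X)$ of $\bigcup_{k=1}^\infty C^*_u(N_k(A))$, where $N_k(A)=\{x\in X: d_X(x,A)\le k\}$ carries the restricted metric and each $T\in C^*_u(N_k(A))\subset\mathbb B(H_{N_k(A)})$ is regarded as the operator on $H_X$ equal to $T$ on $H_{N_k(A)}=\ell^2(N_k(A))$ and $0$ on its orthogonal complement.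
   Context: $H_Z=\ell^2(Z)$ with standard basis $\{\delta_z\}$. For a metric space $(Z,d_Z)$, $C^*_u(Z)$ is the norm closure in $\mathbb B(H_Z)$ of bounded operators of finite propagation ($T$ has propagation at most $L$ if $d_Z(z,z')\ge L$ implies $(\delta_z,T\delta_{z'})=0$). For a metric $d$ on $X\sqcup Y$ extending $d_X$, $M_{Y,d}$ is the norm closure in $\mathbb B(H_X,H_Y)$ of the bounded operators $T:H_X\to H_Y$ of finite propagation (i.e. there is $L$ with $(\delta_y,T\delta_x)=0$ whenever $d(x,y)\ge L$). *)

theory Defs
  imports "HOL-Analysis.Analysis"
begin

text \<open>Vectors of l2(Z), for Z a subset of the ambient type, are represented as
  complex-valued functions on the whole type vanishing outside Z.\<close>

definition ell2_on :: "'a set \<Rightarrow> ('a \<Rightarrow> complex) set" where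
  "ell2_on Z = {f. (\<forall>x. x \<notin> Z \<longrightarrow> f x = 0) \<and> (\<lambda>x. (cmod (f x))^2) summable_on UNIV}"

definition ell2_norm :: "('a \<Rightarrow> complex) \<Rightarrow> real" where
  "ell2_norm f = sqrt (infsum (\<lambda>x. (cmod (f x))^2) UNIV)"

text \<open>Bounded (complex linear) operators from l2(Z) to l2(W); only the values on l2(Z) matter.\<close>

definition bounded_op :: "'a set \<Rightarrow> 'b set \<Rightarrow> (('a \<Rightarrow> complex) \<Rightarrow> ('b \<Rightarrow> complex)) \<Rightarrow> bool" where
  "bounded_op Z W T \<longleftrightarrow>
     (\<forall>f\<in>ell2_on Z. T f \<in> ell2_on W) \<and>
     (\<forall>f\<in>ell2_on Z. \<forall>g\<in>ell2_on Z. T (\<lambda>x. f x + g x) = (\<lambda>y. T f y + T g y)) \<and>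
     (\<forall>c. \<forall>f\<in>ell2_on Z. T (\<lambda>x. c * f x) = (\<lambda>y. c * T f y)) \<and>
     (\<exists>C. \<forall>f\<in>ell2_on Z. ell2_norm (T f) \<le> C * ell2_norm f)"

definition norm_closure ::
  "'a set \<Rightarrow> 'b set \<Rightarrow> (('a \<Rightarrow> complex) \<Rightarrow> ('b \<Rightarrow> complex)) set \<Rightarrow> (('a \<Rightarrow> complex) \<Rightarrow> ('b \<Rightarrow> complex)) set" where
  "norm_closure Z W S = {T. bounded_op Z W T \<and>
     (\<forall>\<epsilon>>0. \<exists>S\<in>S. \<forall>f\<in>ell2_on Z. ell2_norm (\<lambda>y. T f y - S f y) \<le> \<epsilon> * ell2_norm f)}"

definition delta :: "'a \<Rightarrow> 'a \<Rightarrow> complex" where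
  "delta z = (\<lambda>x. if x = z then 1 else 0)"

text \<open>Matrix coefficient (delta z, T delta z') is (T (delta z')) z.\<close>

definition finite_prop_on :: "'a::metric_space set \<Rightarrow> (('a \<Rightarrow> complex) \<Rightarrow> ('a \<Rightarrow> complex)) \<Rightarrow> bool" where
  "finite_prop_on Z T \<longleftrightarrow> (\<exists>L. \<forall>z\<in>Z. \<forall>z'\<in>Z. L \<le> dist z z' \<longrightarrow> T (delta z') z = 0)"

definition uniform_roe :: "'a::metric_space set \<Rightarrow> (('a \<Rightarrow> complex) \<Rightarrow> ('a \<Rightarrow> complex)) set" where
  "uniform_roe Z = norm_closure Z Z {T. bounded_op Z Z T \<and> finite_prop_on Z T}"

text \<open>The metric d^A on X_0 + X_1, with Inl x = x_0 and Inr x = x_1.\<close>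

definition dA :: "'a::metric_space set \<Rightarrow> 'a + 'a \<Rightarrow> 'a + 'a \<Rightarrow> real" where
  "dA A p q = (case (p, q) of
       (Inl x, Inl y) \<Rightarrow> dist x y
     | (Inr x, Inr y) \<Rightarrow> dist x y
     | (Inl x, Inr y) \<Rightarrow> Inf ((\<lambda>z. dist x z + dist y z + 1) ` A)
     | (Inr y, Inl x) \<Rightarrow> Inf ((\<lambda>z. dist x z + dist y z + 1) ` A))"

text \<open>The module M_{X_1, d^A}, with B(H_{X_0}, H_{X_1}) identified with B(H_X):
  an operator T on l2(X) has coefficient (delta y_1, T delta x_0) = (T (delta x)) y.\<close>

definition M_module :: "'a::metric_space set \<Rightarrow> (('a \<Rightarrow> complex) \<Rightarrow> ('a \<Rightarrow> complex)) set" where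
  "M_module A = norm_closure UNIV UNIV
     {T. bounded_op UNIV UNIV T \<and>
         (\<exists>L. \<forall>x y. L \<le> dA A (Inl x) (Inr y) \<longrightarrow> T (delta x) y = 0)}"

definition nbhd :: "nat \<Rightarrow> 'a::metric_space set \<Rightarrow> 'a set" where
  "nbhd k A = {x. infdist x A \<le> real k}"

definition extend_by_zero :: "'a set \<Rightarrow> (('a \<Rightarrow> complex) \<Rightarrow> ('a \<Rightarrow> complex)) \<Rightarrow> (('a \<Rightarrow> complex) \<Rightarrow> ('a \<Rightarrow> complex))" where
  "extend_by_zero Z T = (\<lambda>f. T (\<lambda>x. if x \<in> Z then f x else 0))"

end

theory Submission imports Defs begin

text \<open>A finite-propagation operator for d^A has its matrix supported in N_k(A) \<times> N_k(A)
  for k large, since d^A(x_0, y_1) \<ge> max (d(x,A), d(y,A)) + 1; its compression to l2(N_k(A))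
  then has finite propagation for the restricted metric, because d^A(x_0, y_1) \<ge> d(x,y) + 1.
  Conversely, for x, y \<in> N_k(A) one has d^A(x_0, y_1) \<le> d(x,y) + 2k + 1, so the extension by
  zero of a finite-propagation operator on N_k(A) has finite d^A-propagation. Both classes of
  generators therefore approximate each other in norm, and their norm closures coincide.\<close>

definition zero_outside :: "'a set \<Rightarrow> ('a \<Rightarrow> complex) \<Rightarrow> ('a \<Rightarrow> complex)" where
  "zero_outside Z f = (\<lambda>x. if x \<in> Z then f x else 0)"

lemma extend_by_zero_apply: "extend_by_zero Z T f = T (zero_outside Z f)"
  by (simp add: extend_by_zero_def zero_outside_def)

subsection \<open>The sequence space l2\<close>

lemma ell2_on_mono: "f \<in> ell2_on Z \<Longrightarrow> Z \<subseteq> W \<Longrightarrow> f \<in> ell2_on W"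
  by (auto simp: ell2_on_def)

lemma ell2_on_UNIV: "f \<in> ell2_on Z \<Longrightarrow> f \<in> ell2_on UNIV"
  by (simp add: ell2_on_def)

lemma ell2_norm_nonneg: "ell2_norm f \<ge> 0"
  unfolding ell2_norm_def by (simp add: infsum_nonneg)

lemma ell2_norm_zero [simp]: "ell2_norm (\<lambda>_. 0) = 0"
  by (simp add: ell2_norm_def)

lemma
  assumes "f \<in> ell2_on UNIV" and "\<And>x. cmod (g x) \<le> cmod (f x)"
  shows ell2_on_dominated: "g \<in> ell2_on UNIV"
    and ell2_norm_dominated: "ell2_norm g \<le> ell2_norm f"
proof -
  have le: "\<And>x. (cmod (g x))^2 \<le> (cmod (f x))^2" using assms(2) by (simp add: power_mono)
  have "(\<lambda>x. (cmod (g x))^2) summable_on UNIV"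
    by (rule summable_on_comparison_test[OF _ le]) (use assms in \<open>auto simp: ell2_on_def\<close>)
  then show "g \<in> ell2_on UNIV" by (simp add: ell2_on_def)
  show "ell2_norm g \<le> ell2_norm f" unfolding ell2_norm_def
    by (intro real_sqrt_le_mono infsum_mono le \<open>_ summable_on UNIV\<close>) (use assms in \<open>auto simp: ell2_on_def\<close>)
qed

lemma
  assumes "f \<in> ell2_on UNIV"
  shows zero_outside_in_ell2_on: "zero_outside Z f \<in> ell2_on Z"
    and ell2_norm_zero_outside_le: "ell2_norm (zero_outside Z f) \<le> ell2_norm f"
proof -
  have "zero_outside Z f \<in> ell2_on UNIV"
    by (rule ell2_on_dominated[OF assms]) (simp add: zero_outside_def)
  then show "zero_outside Z f \<in> ell2_on Z" by (auto simp: ell2_on_def zero_outside_def)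
  show "ell2_norm (zero_outside Z f) \<le> ell2_norm f"
    by (rule ell2_norm_dominated[OF assms]) (simp add: zero_outside_def)
qed

lemma ell2_on_pointwise_triangle:
  assumes "f \<in> ell2_on Z" "g \<in> ell2_on Z" "\<And>x. cmod (h x) \<le> cmod (f x) + cmod (g x)"
  shows "h \<in> ell2_on Z"
proof -
  have le: "(cmod (h x))^2 \<le> 2 * (cmod (f x))^2 + 2 * (cmod (g x))^2" for x
  proof -
    have "(cmod (h x))^2 \<le> (cmod (f x) + cmod (g x))^2"
      using assms(3)[of x] by (simp add: power_mono)
    also have "\<dots> \<le> 2 * (cmod (f x))^2 + 2 * (cmod (g x))^2"
      by (smt (verit) power2_sum sum_squares_bound)
    finally show ?thesis .
  qed
  have "(\<lambda>x. 2 * (cmod (f x))^2 + 2 * (cmod (g x))^2) summable_on UNIV"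
    using assms(1,2) by (intro summable_on_add summable_on_cmult_right) (auto simp: ell2_on_def)
  then have "(\<lambda>x. (cmod (h x))^2) summable_on UNIV"
    by (rule summable_on_comparison_test[OF _ le]) auto
  moreover have "h x = 0" if "x \<notin> Z" for x
    using assms(3)[of x] assms(1,2) that by (simp add: ell2_on_def)
  ultimately show ?thesis by (simp add: ell2_on_def)
qed

lemma ell2_on_add: "f \<in> ell2_on Z \<Longrightarrow> g \<in> ell2_on Z \<Longrightarrow> (\<lambda>x. f x + g x) \<in> ell2_on Z"
  by (rule ell2_on_pointwise_triangle[of f Z g]) (auto intro: norm_triangle_ineq)

lemma ell2_on_diff: "f \<in> ell2_on Z \<Longrightarrow> g \<in> ell2_on Z \<Longrightarrow> (\<lambda>x. f x - g x) \<in> ell2_on Z"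
  by (rule ell2_on_pointwise_triangle[of f Z g]) (auto intro: norm_triangle_ineq4)

lemma ell2_on_scale: "f \<in> ell2_on Z \<Longrightarrow> (\<lambda>x. c * f x) \<in> ell2_on Z"
proof -
  assume f: "f \<in> ell2_on Z"
  have "(\<lambda>x. (cmod c)^2 * (cmod (f x))^2) summable_on UNIV"
    using f by (intro summable_on_cmult_right) (auto simp: ell2_on_def)
  then show ?thesis using f by (auto simp: ell2_on_def norm_mult power_mult_distrib)
qed

lemma delta_in_ell2_on: "delta a \<in> ell2_on {a}"
proof -
  have "(\<lambda>x. (cmod (delta a x))^2) summable_on UNIV \<longleftrightarrow> (\<lambda>x. (cmod (delta a x))^2) summable_on {a}"
    by (rule summable_on_cong_neutral) (auto simp: delta_def)
  then show ?thesis by (auto simp: ell2_on_def delta_def)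
qed

lemma norm_le_ell2_norm: assumes "f \<in> ell2_on UNIV" shows "cmod (f y) \<le> ell2_norm f"
proof -
  have "(cmod (f y))^2 \<le> infsum (\<lambda>x. (cmod (f x))^2) UNIV"
    using finite_sum_le_infsum[of "\<lambda>x. (cmod (f x))^2" UNIV "{y}"] assms by (auto simp: ell2_on_def)
  then have "sqrt ((cmod (f y))^2) \<le> ell2_norm f" unfolding ell2_norm_def
    by (rule real_sqrt_le_mono)
  then show ?thesis by simp
qed

lemma L2_set_le_ell2_norm:
  assumes "f \<in> ell2_on UNIV" "finite F"
  shows "L2_set (\<lambda>x. cmod (f x)) F \<le> ell2_norm f"
  unfolding L2_set_def ell2_norm_def
  by (intro real_sqrt_le_mono finite_sum_le_infsum) (use assms in \<open>auto simp: ell2_on_def\<close>)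

lemma ell2_norm_triangle:
  assumes "f \<in> ell2_on UNIV" "g \<in> ell2_on UNIV"
  shows "ell2_norm (\<lambda>x. f x + g x) \<le> ell2_norm f + ell2_norm g"
proof -
  have "infsum (\<lambda>x. (cmod (f x + g x))^2) UNIV \<le> (ell2_norm f + ell2_norm g)^2"
  proof (rule infsum_le_finite_sums)
    show "(\<lambda>x. (cmod (f x + g x))^2) summable_on UNIV"
      using ell2_on_add[OF assms] by (simp add: ell2_on_def)
    fix F :: "'a set" assume F: "finite F" "F \<subseteq> UNIV"
    have "L2_set (\<lambda>x. cmod (f x + g x)) F \<le> L2_set (\<lambda>x. cmod (f x) + cmod (g x)) F"
      by (rule L2_set_mono) (auto simp: norm_triangle_ineq)
    also have "\<dots> \<le> L2_set (\<lambda>x. cmod (f x)) F + L2_set (\<lambda>x. cmod (g x)) F"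
      by (rule L2_set_triangle_ineq)
    also have "\<dots> \<le> ell2_norm f + ell2_norm g"
      using L2_set_le_ell2_norm[OF assms(1) F(1)] L2_set_le_ell2_norm[OF assms(2) F(1)] by simp
    finally have "(L2_set (\<lambda>x. cmod (f x + g x)) F)^2 \<le> (ell2_norm f + ell2_norm g)^2"
      by (simp add: power_mono L2_set_nonneg)
    then show "sum (\<lambda>x. (cmod (f x + g x))^2) F \<le> (ell2_norm f + ell2_norm g)^2"
      by (simp add: L2_set_def sum_nonneg)
  qed
  then have "ell2_norm (\<lambda>x. f x + g x) \<le> sqrt ((ell2_norm f + ell2_norm g)^2)"
    unfolding ell2_norm_def by (rule real_sqrt_le_mono)
  then show ?thesis using ell2_norm_nonneg[of f] ell2_norm_nonneg[of g] by simp
qed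

lemma ell2_norm_tail_small:
  assumes "f \<in> ell2_on UNIV" "\<epsilon> > 0"
  obtains F where "finite F" "ell2_norm (zero_outside (- F) f) \<le> \<epsilon>"
proof -
  define g where "g = (\<lambda>x. (cmod (f x))^2)"
  have g: "g summable_on UNIV" using assms by (simp add: g_def ell2_on_def)
  then have "(sum g \<longlongrightarrow> infsum g UNIV) (finite_subsets_at_top UNIV)"
    using has_sum_infsum unfolding has_sum_def by blast
  then have "eventually (\<lambda>F. dist (sum g F) (infsum g UNIV) < \<epsilon>^2) (finite_subsets_at_top UNIV)"
    using assms(2) by (simp add: tendsto_iff)
  then obtain X where X: "finite X" "dist (sum g X) (infsum g UNIV) < \<epsilon>^2"
    unfolding eventually_finite_subsets_at_top by blast
  have "infsum (\<lambda>x. (cmod (zero_outside (- X) f x))^2) UNIV \<le> \<epsilon>^2"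
  proof (rule infsum_le_finite_sums)
    show "(\<lambda>x. (cmod (zero_outside (- X) f x))^2) summable_on UNIV"
      using zero_outside_in_ell2_on[OF assms(1)] by (simp add: ell2_on_def)
    fix G :: "'a set" assume G: "finite G" "G \<subseteq> UNIV"
    have "sum (\<lambda>x. (cmod (zero_outside (- X) f x))^2) G = sum g (G - X)"
      by (rule sum.mono_neutral_cong_right) (use G in \<open>auto simp: g_def zero_outside_def\<close>)
    also have "\<dots> = sum g (G \<union> X) - sum g X"
      using G X by (metis Un_Diff_cancel2 add_diff_cancel_right' finite_Diff sum.union_disjoint Diff_disjoint inf_commute)
    also have "sum g (G \<union> X) \<le> infsum g UNIV"
      by (rule finite_sum_le_infsum) (use g G X in \<open>auto simp: g_def\<close>)
    finally show "sum (\<lambda>x. (cmod (zero_outside (- X) f x))^2) G \<le> \<epsilon>^2"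
      using X(2) by (simp add: dist_real_def)
  qed
  then have "ell2_norm (zero_outside (- X) f) \<le> sqrt (\<epsilon>^2)"
    unfolding ell2_norm_def by (rule real_sqrt_le_mono)
  then show ?thesis using that[OF X(1)] assms(2) by simp
qed

subsection \<open>Bounded operators and their matrix coefficients\<close>

lemma bounded_op_in: "bounded_op Z W S \<Longrightarrow> f \<in> ell2_on Z \<Longrightarrow> S f \<in> ell2_on W"
  unfolding bounded_op_def by blast

lemma bounded_op_add:
  "bounded_op Z W S \<Longrightarrow> f \<in> ell2_on Z \<Longrightarrow> g \<in> ell2_on Z \<Longrightarrow> S (\<lambda>x. f x + g x) y = S f y + S g y"
proof -
  assume "bounded_op Z W S" "f \<in> ell2_on Z" "g \<in> ell2_on Z"
  then have "S (\<lambda>x. f x + g x) = (\<lambda>y. S f y + S g y)" unfolding bounded_op_def by blast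
  then show ?thesis by simp
qed

lemma bounded_op_scale: "bounded_op Z W S \<Longrightarrow> f \<in> ell2_on Z \<Longrightarrow> S (\<lambda>x. c * f x) y = c * S f y"
proof -
  assume "bounded_op Z W S" "f \<in> ell2_on Z"
  then have "S (\<lambda>x. c * f x) = (\<lambda>y. c * S f y)" unfolding bounded_op_def by blast
  then show ?thesis by simp
qed

lemma bounded_op_zero: "bounded_op Z W S \<Longrightarrow> S (\<lambda>_. 0) = (\<lambda>_. 0)"
  using bounded_op_scale[of Z W S "\<lambda>_. 0" 0] by (auto simp: ell2_on_def)

lemma bounded_op_bound:
  assumes "bounded_op Z W S"
  obtains C where "C \<ge> 0" "\<And>f. f \<in> ell2_on Z \<Longrightarrow> ell2_norm (S f) \<le> C * ell2_norm f"
proof -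
  obtain C where C: "\<forall>f\<in>ell2_on Z. ell2_norm (S f) \<le> C * ell2_norm f"
    using assms unfolding bounded_op_def by blast
  have bound: "ell2_norm (S f) \<le> \<bar>C\<bar> * ell2_norm f" if "f \<in> ell2_on Z" for f
  proof -
    have "ell2_norm (S f) \<le> C * ell2_norm f" using C that by blast
    also have "\<dots> \<le> \<bar>C\<bar> * ell2_norm f" by (rule mult_right_mono) (simp_all add: ell2_norm_nonneg)
    finally show ?thesis .
  qed
  show ?thesis by (rule that[of "\<bar>C\<bar>"]) (simp_all add: bound)
qed

lemma bounded_op_finite_support:
  assumes S: "bounded_op UNIV W S" and F: "finite F" and h: "h \<in> ell2_on UNIV"
  shows "S (zero_outside F h) y = (\<Sum>x\<in>F. h x * S (delta x) y)"
  using F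
proof (induction F)
  case empty
  have "zero_outside {} h = (\<lambda>_. 0)" by (simp add: zero_outside_def)
  then show ?case using bounded_op_zero[OF S] by simp
next
  case (insert a F)
  have d: "delta a \<in> ell2_on UNIV" using delta_in_ell2_on by (rule ell2_on_UNIV)
  have rest: "zero_outside F h \<in> ell2_on UNIV"
    using zero_outside_in_ell2_on[OF h] by (rule ell2_on_UNIV)
  have "zero_outside (insert a F) h = (\<lambda>x. h a * delta a x + zero_outside F h x)"
    using insert.hyps by (auto simp: delta_def zero_outside_def)
  then have "S (zero_outside (insert a F) h) y = S (\<lambda>x. h a * delta a x) y + S (zero_outside F h) y"
    using bounded_op_add[OF S ell2_on_scale[OF d] rest, where y = y] by (simp only:)
  also have "\<dots> = h a * S (delta a) y + (\<Sum>x\<in>F. h x * S (delta x) y)"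
    using bounded_op_scale[OF S d, where c = "h a" and y = y] insert.IH by (simp only:)
  finally show ?case using insert.hyps by simp
qed

lemma bounded_op_apply_eq_0:
  assumes S: "bounded_op UNIV W S" and h: "h \<in> ell2_on UNIV"
    and coeff: "\<And>x. h x \<noteq> 0 \<Longrightarrow> S (delta x) y = 0"
  shows "S h y = 0"
proof -
  obtain C where C: "C \<ge> 0" "\<And>f. f \<in> ell2_on UNIV \<Longrightarrow> ell2_norm (S f) \<le> C * ell2_norm f"
    using bounded_op_bound[OF S] by metis
  have "cmod (S h y) \<le> e" if e: "e > 0" for e
  proof -
    have "e / (C + 1) > 0" using e C(1) by simp
    then obtain F where F: "finite F" "ell2_norm (zero_outside (- F) h) \<le> e / (C + 1)"
      by (rule ell2_norm_tail_small[OF h])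
    have tail: "zero_outside (- F) h \<in> ell2_on UNIV"
      using zero_outside_in_ell2_on[OF h] by (rule ell2_on_UNIV)
    have head: "zero_outside F h \<in> ell2_on UNIV"
      using zero_outside_in_ell2_on[OF h] by (rule ell2_on_UNIV)
    have "h x * S (delta x) y = 0" for x using coeff[of x] by (cases "h x = 0") simp_all
    then have "S (zero_outside F h) y = 0"
      using bounded_op_finite_support[OF S F(1) h] by (simp add: sum.neutral)
    moreover have "S h y = S (\<lambda>x. zero_outside F h x + zero_outside (- F) h x) y"
      by (rule arg_cong[where f = "\<lambda>g. S g y"]) (auto simp: zero_outside_def)
    ultimately have "S h y = S (zero_outside (- F) h) y"
      using bounded_op_add[OF S head tail, of y] by simp
    then have "cmod (S h y) \<le> ell2_norm (S (zero_outside (- F) h))"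
      using norm_le_ell2_norm[OF ell2_on_UNIV[OF bounded_op_in[OF S tail]]] by simp
    also have "\<dots> \<le> C * ell2_norm (zero_outside (- F) h)" using C(2)[OF tail] .
    also have "\<dots> \<le> C * (e / (C + 1))" using F(2) C(1) by (rule mult_left_mono)
    also have "\<dots> \<le> (C + 1) * (e / (C + 1))" using e C(1) by (intro mult_right_mono) simp_all
    also have "\<dots> = e" using C(1) by simp
    finally show ?thesis .
  qed
  then have "cmod (S h y) \<le> 0" by (rule field_le_epsilon) simp
  then show ?thesis by simp
qed

lemma norm_closure_subset_norm_closure:
  assumes G: "\<And>S. S \<in> G \<Longrightarrow> bounded_op Z W S"
    and U: "\<And>S. S \<in> U \<Longrightarrow> bounded_op Z W S"
    and approx: "\<And>S \<epsilon>. S \<in> G \<Longrightarrow> \<epsilon> > 0 \<Longrightarrow>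
      \<exists>S'\<in>U. \<forall>f\<in>ell2_on Z. ell2_norm (\<lambda>y. S f y - S' f y) \<le> \<epsilon> * ell2_norm f"
  shows "norm_closure Z W G \<subseteq> norm_closure Z W U"
proof
  fix T assume "T \<in> norm_closure Z W G"
  then have T: "bounded_op Z W T"
    and T_approx: "\<And>\<epsilon>. \<epsilon> > 0 \<Longrightarrow> \<exists>S\<in>G. \<forall>f\<in>ell2_on Z. ell2_norm (\<lambda>y. T f y - S f y) \<le> \<epsilon> * ell2_norm f"
    unfolding norm_closure_def by blast+
  have "\<exists>S'\<in>U. \<forall>f\<in>ell2_on Z. ell2_norm (\<lambda>y. T f y - S' f y) \<le> \<epsilon> * ell2_norm f" if "\<epsilon> > 0" for \<epsilon>
  proof -
    obtain S where S: "S \<in> G" and TS: "\<forall>f\<in>ell2_on Z. ell2_norm (\<lambda>y. T f y - S f y) \<le> \<epsilon> / 2 * ell2_norm f"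
      using T_approx[of "\<epsilon> / 2"] \<open>\<epsilon> > 0\<close> by auto
    obtain S' where S': "S' \<in> U" and SS': "\<forall>f\<in>ell2_on Z. ell2_norm (\<lambda>y. S f y - S' f y) \<le> \<epsilon> / 2 * ell2_norm f"
      using approx[OF S, of "\<epsilon> / 2"] \<open>\<epsilon> > 0\<close> by auto
    have "ell2_norm (\<lambda>y. T f y - S' f y) \<le> \<epsilon> * ell2_norm f" if f: "f \<in> ell2_on Z" for f
    proof -
      have Tf: "T f \<in> ell2_on UNIV" and Sf: "S f \<in> ell2_on UNIV" and S'f: "S' f \<in> ell2_on UNIV"
        using bounded_op_in[OF T f] bounded_op_in[OF G[OF S] f] bounded_op_in[OF U[OF S'] f]
        by (auto intro: ell2_on_UNIV)
      have "ell2_norm (\<lambda>y. T f y - S' f y) = ell2_norm (\<lambda>y. (T f y - S f y) + (S f y - S' f y))"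
        by simp
      also have "\<dots> \<le> ell2_norm (\<lambda>y. T f y - S f y) + ell2_norm (\<lambda>y. S f y - S' f y)"
        by (rule ell2_norm_triangle[OF ell2_on_diff[OF Tf Sf] ell2_on_diff[OF Sf S'f]])
      also have "\<dots> \<le> \<epsilon> / 2 * ell2_norm f + \<epsilon> / 2 * ell2_norm f"
        using TS SS' f by (meson add_mono)
      finally show ?thesis by simp
    qed
    then show ?thesis using S' by blast
  qed
  then show "T \<in> norm_closure Z W U" unfolding norm_closure_def using T by blast
qed

lemma bounded_op_finite_prop_in_uniform_roe:
  "bounded_op Z Z R \<Longrightarrow> finite_prop_on Z R \<Longrightarrow> R \<in> uniform_roe Z"
  unfolding uniform_roe_def norm_closure_def
  by (auto intro!: exI[of _ R] simp: ell2_norm_nonneg)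

subsection \<open>Extension by zero and compression\<close>

lemma bounded_op_extend_by_zero:
  assumes R: "bounded_op Z W R"
  shows "bounded_op UNIV UNIV (extend_by_zero Z R)"
  unfolding bounded_op_def extend_by_zero_apply
proof (intro conjI ballI allI)
  fix f :: "'a \<Rightarrow> complex" assume f: "f \<in> ell2_on UNIV"
  show "R (zero_outside Z f) \<in> ell2_on UNIV"
    using bounded_op_in[OF R zero_outside_in_ell2_on[OF f]] by (rule ell2_on_UNIV)
next
  fix f g :: "'a \<Rightarrow> complex" assume f: "f \<in> ell2_on UNIV" and g: "g \<in> ell2_on UNIV"
  have "zero_outside Z (\<lambda>x. f x + g x) = (\<lambda>x. zero_outside Z f x + zero_outside Z g x)"
    by (auto simp: zero_outside_def)
  then show "R (zero_outside Z (\<lambda>x. f x + g x)) = (\<lambda>y. R (zero_outside Z f) y + R (zero_outside Z g) y)"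
    using bounded_op_add[OF R zero_outside_in_ell2_on[OF f] zero_outside_in_ell2_on[OF g]]
    by (intro ext) (simp only:)
next
  fix c and f :: "'a \<Rightarrow> complex" assume f: "f \<in> ell2_on UNIV"
  have "zero_outside Z (\<lambda>x. c * f x) = (\<lambda>x. c * zero_outside Z f x)"
    by (auto simp: zero_outside_def)
  then show "R (zero_outside Z (\<lambda>x. c * f x)) = (\<lambda>y. c * R (zero_outside Z f) y)"
    using bounded_op_scale[OF R zero_outside_in_ell2_on[OF f]] by (intro ext) (simp only:)
next
  obtain C where C: "C \<ge> 0" "\<And>g. g \<in> ell2_on Z \<Longrightarrow> ell2_norm (R g) \<le> C * ell2_norm g"
    using bounded_op_bound[OF R] by metis
  have "ell2_norm (R (zero_outside Z f)) \<le> C * ell2_norm f" if f: "f \<in> ell2_on UNIV" for f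
    using C(2)[OF zero_outside_in_ell2_on[OF f]] mult_left_mono[OF ell2_norm_zero_outside_le[OF f, where Z = Z] C(1)]
    by (rule order_trans)
  then show "\<exists>C. \<forall>f\<in>ell2_on UNIV. ell2_norm (R (zero_outside Z f)) \<le> C * ell2_norm f" by blast
qed

lemma extend_by_zero_approx:
  assumes "\<epsilon> \<ge> 0" and "\<And>g. g \<in> ell2_on Z \<Longrightarrow> ell2_norm (\<lambda>y. R g y - S g y) \<le> \<epsilon> * ell2_norm g"
    and "f \<in> ell2_on UNIV"
  shows "ell2_norm (\<lambda>y. extend_by_zero Z R f y - extend_by_zero Z S f y) \<le> \<epsilon> * ell2_norm f"
  unfolding extend_by_zero_apply
  using assms(2)[OF zero_outside_in_ell2_on[OF assms(3)]]
    mult_left_mono[OF ell2_norm_zero_outside_le[OF assms(3), where Z = Z] assms(1)]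
  by (rule order_trans)

lemma bounded_op_compression:
  assumes S: "bounded_op UNIV W S"
  shows "bounded_op Z Z (\<lambda>g. zero_outside Z (S g))"
  unfolding bounded_op_def
proof (intro conjI ballI allI)
  fix g assume g: "g \<in> ell2_on Z"
  show "zero_outside Z (S g) \<in> ell2_on Z"
    using bounded_op_in[OF S ell2_on_UNIV[OF g]] by (intro zero_outside_in_ell2_on ell2_on_UNIV)
next
  fix g h assume g: "g \<in> ell2_on Z" and h: "h \<in> ell2_on Z"
  show "zero_outside Z (S (\<lambda>x. g x + h x)) = (\<lambda>y. zero_outside Z (S g) y + zero_outside Z (S h) y)"
    using bounded_op_add[OF S ell2_on_UNIV[OF g] ell2_on_UNIV[OF h]] by (auto simp: zero_outside_def)
next
  fix c g assume g: "g \<in> ell2_on Z"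
  show "zero_outside Z (S (\<lambda>x. c * g x)) = (\<lambda>y. c * zero_outside Z (S g) y)"
    using bounded_op_scale[OF S ell2_on_UNIV[OF g]] by (auto simp: zero_outside_def)
next
  obtain C where C: "C \<ge> 0" "\<And>f. f \<in> ell2_on UNIV \<Longrightarrow> ell2_norm (S f) \<le> C * ell2_norm f"
    using bounded_op_bound[OF S] by metis
  have "ell2_norm (zero_outside Z (S g)) \<le> C * ell2_norm g" if g: "g \<in> ell2_on Z" for g
    using ell2_norm_zero_outside_le[OF ell2_on_UNIV[OF bounded_op_in[OF S ell2_on_UNIV[OF g]]], where Z = Z]
      C(2)[OF ell2_on_UNIV[OF g]]
    by linarith
  then show "\<exists>C. \<forall>g\<in>ell2_on Z. ell2_norm (zero_outside Z (S g)) \<le> C * ell2_norm g" by blast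
qed

lemma extend_by_zero_compression:
  assumes S: "bounded_op UNIV W S" and f: "f \<in> ell2_on UNIV"
    and supp: "\<And>x y. x \<notin> Z \<or> y \<notin> Z \<Longrightarrow> S (delta x) y = 0"
  shows "extend_by_zero Z (\<lambda>g. zero_outside Z (S g)) f = S f"
proof
  fix y
  have head: "zero_outside Z f \<in> ell2_on UNIV" and tail: "zero_outside (- Z) f \<in> ell2_on UNIV"
    using zero_outside_in_ell2_on[OF f] by (auto intro: ell2_on_UNIV)
  show "extend_by_zero Z (\<lambda>g. zero_outside Z (S g)) f y = S f y"
  proof (cases "y \<in> Z")
    case False
    then show ?thesis
      using bounded_op_apply_eq_0[OF S f, of y] supp by (simp add: extend_by_zero_apply zero_outside_def)
  next
    case True
    have "S f y = S (\<lambda>x. zero_outside Z f x + zero_outside (- Z) f x) y"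
      by (rule arg_cong[where f = "\<lambda>g. S g y"]) (auto simp: zero_outside_def)
    also have "\<dots> = S (zero_outside Z f) y + S (zero_outside (- Z) f) y"
      by (rule bounded_op_add[OF S head tail])
    also have "S (zero_outside (- Z) f) y = 0"
      by (rule bounded_op_apply_eq_0[OF S tail]) (use supp in \<open>auto simp: zero_outside_def split: if_splits\<close>)
    finally show ?thesis using True by (simp add: extend_by_zero_apply zero_outside_def)
  qed
qed

subsection \<open>The metric d^A\<close>

lemma dA_Inl_Inr: "dA A (Inl x) (Inr y) = (INF z\<in>A. dist x z + dist y z + 1)"
  by (simp add: dA_def)

lemma le_dA_Inl_Inr:
  assumes "A \<noteq> {}" "\<And>z. z \<in> A \<Longrightarrow> m \<le> dist x z + dist y z + 1"
  shows "m \<le> dA A (Inl x) (Inr y)"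
  unfolding dA_Inl_Inr by (rule cINF_greatest) (use assms in auto)

lemma dist_plus_one_le_dA: "A \<noteq> {} \<Longrightarrow> dist x y + 1 \<le> dA A (Inl x) (Inr y)"
  by (rule le_dA_Inl_Inr) (auto simp: dist_triangle2)

lemma infdist_left_plus_one_le_dA: "A \<noteq> {} \<Longrightarrow> infdist x A + 1 \<le> dA A (Inl x) (Inr y)"
  by (rule le_dA_Inl_Inr) (auto intro: add_increasing2 order_trans[OF infdist_le])

lemma infdist_right_plus_one_le_dA: "A \<noteq> {} \<Longrightarrow> infdist y A + 1 \<le> dA A (Inl x) (Inr y)"
  by (rule le_dA_Inl_Inr) (auto intro: add_increasing order_trans[OF infdist_le])

lemma dA_le_dist_plus_infdist:
  assumes "A \<noteq> {}"
  shows "dA A (Inl x) (Inr y) \<le> dist x y + 2 * infdist x A + 1"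
proof -
  have "dA A (Inl x) (Inr y) \<le> dist x z + dist y z + 1" if "z \<in> A" for z
    unfolding dA_Inl_Inr by (rule cINF_lower) (use that in \<open>auto intro: bdd_belowI[of _ 0]\<close>)
  then have "(dA A (Inl x) (Inr y) - dist x y - 1) / 2 \<le> dist x z" if "z \<in> A" for z
  proof -
    have "dist y z \<le> dist x y + dist x z" by (metis dist_commute dist_triangle)
    then show ?thesis using \<open>_ \<Longrightarrow> dA A (Inl x) (Inr y) \<le> _\<close>[OF that]
      by (subst pos_divide_le_eq) linarith+
  qed
  then have "(dA A (Inl x) (Inr y) - dist x y - 1) / 2 \<le> infdist x A"
    unfolding infdist_notempty[OF assms] by (intro cINF_greatest assms)
  then show ?thesis by simp
qed

definition finite_dA_propagation ::
  "'a::metric_space set \<Rightarrow> (('a \<Rightarrow> complex) \<Rightarrow> ('a \<Rightarrow> complex)) \<Rightarrow> bool" where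
  "finite_dA_propagation A T \<longleftrightarrow> (\<exists>L. \<forall>x y. L \<le> dA A (Inl x) (Inr y) \<longrightarrow> T (delta x) y = 0)"

lemma M_module_eq:
  "M_module A = norm_closure UNIV UNIV {T. bounded_op UNIV UNIV T \<and> finite_dA_propagation A T}"
  by (simp add: M_module_def finite_dA_propagation_def)

lemma finite_dA_propagation_extend_by_zero:
  assumes A: "A \<noteq> {}" and R: "bounded_op (nbhd k A) (nbhd k A) R"
    and R_prop: "finite_prop_on (nbhd k A) R"
  shows "finite_dA_propagation A (extend_by_zero (nbhd k A) R)"
proof -
  define Z where "Z = nbhd k A"
  obtain L where L: "\<And>z z'. z \<in> Z \<Longrightarrow> z' \<in> Z \<Longrightarrow> L \<le> dist z z' \<Longrightarrow> R (delta z') z = 0"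
    using R_prop unfolding finite_prop_on_def Z_def by blast
  have "extend_by_zero Z R (delta x) y = 0"
    if far: "L + 2 * real k + 1 \<le> dA A (Inl x) (Inr y)" for x y
  proof (cases "x \<in> Z")
    case False
    then have "zero_outside Z (delta x) = (\<lambda>_. 0)" by (auto simp: zero_outside_def delta_def)
    then show ?thesis using bounded_op_zero[OF R] by (simp add: extend_by_zero_apply Z_def)
  next
    case x: True
    then have Rx: "extend_by_zero Z R (delta x) = R (delta x)"
      by (auto simp: extend_by_zero_apply zero_outside_def delta_def intro!: arg_cong[where f = R])
    have "R (delta x) \<in> ell2_on Z"
      using bounded_op_in[OF R ell2_on_mono[OF delta_in_ell2_on]] x by (simp add: Z_def)
    moreover have "L \<le> dist y x" if "y \<in> Z"
      using far dA_le_dist_plus_infdist[OF A, of x y] x by (simp add: Z_def nbhd_def dist_commute)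
    ultimately show ?thesis using L x Rx by (cases "y \<in> Z") (auto simp: ell2_on_def)
  qed
  then show ?thesis unfolding finite_dA_propagation_def Z_def by blast
qed

lemma extend_roe_approx_by_finite_dA_propagation:
  assumes A: "A \<noteq> {}" and R: "R \<in> uniform_roe (nbhd k A)" and e: "\<epsilon> > 0"
  shows "\<exists>S. bounded_op UNIV UNIV S \<and> finite_dA_propagation A S \<and>
    (\<forall>f\<in>ell2_on UNIV. ell2_norm (\<lambda>y. extend_by_zero (nbhd k A) R f y - S f y) \<le> \<epsilon> * ell2_norm f)"
proof -
  obtain S where S: "bounded_op (nbhd k A) (nbhd k A) S" "finite_prop_on (nbhd k A) S"
    and RS: "\<And>g. g \<in> ell2_on (nbhd k A) \<Longrightarrow> ell2_norm (\<lambda>y. R g y - S g y) \<le> \<epsilon> * ell2_norm g"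
    using R e unfolding uniform_roe_def norm_closure_def by blast
  show ?thesis
    using bounded_op_extend_by_zero[OF S(1)] finite_dA_propagation_extend_by_zero[OF A S]
      extend_by_zero_approx[OF less_imp_le[OF e] RS]
    by blast
qed

lemma finite_dA_propagation_eq_extend_roe:
  assumes A: "A \<noteq> {}" and S: "bounded_op UNIV UNIV S" and S_prop: "finite_dA_propagation A S"
  shows "\<exists>k\<in>{1..}. \<exists>R\<in>uniform_roe (nbhd k A). \<forall>f\<in>ell2_on UNIV. extend_by_zero (nbhd k A) R f = S f"
proof -
  obtain L where L: "\<And>x y. L \<le> dA A (Inl x) (Inr y) \<Longrightarrow> S (delta x) y = 0"
    using S_prop unfolding finite_dA_propagation_def by blast
  define k where "k = nat \<lceil>L\<rceil> + 1"
  define Z where "Z = nbhd k A"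
  have "L \<le> real k" unfolding k_def by linarith
  then have supp: "S (delta x) y = 0" if "x \<notin> Z \<or> y \<notin> Z" for x y
    using that L[of x y] infdist_left_plus_one_le_dA[OF A, where x = x and y = y]
      infdist_right_plus_one_le_dA[OF A, where x = x and y = y]
    by (auto simp: Z_def nbhd_def)
  have "S (delta z') z = 0" if "L \<le> dist z z'" for z z'
    using that L[of z' z] dist_plus_one_le_dA[OF A, of z' z] by (simp add: dist_commute)
  then have "finite_prop_on Z (\<lambda>g. zero_outside Z (S g))"
    unfolding finite_prop_on_def zero_outside_def by (intro exI[of _ L]) simp
  then have "(\<lambda>g. zero_outside Z (S g)) \<in> uniform_roe Z"
    by (rule bounded_op_finite_prop_in_uniform_roe[OF bounded_op_compression[OF S]])
  moreover have "k \<in> {1..}" by (simp add: k_def)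
  ultimately show ?thesis
    using extend_by_zero_compression[OF S _ supp] unfolding Z_def by blast
qed

theorem mainTheorem6:
  fixes A :: "'a::metric_space set"
  assumes "countable (UNIV :: 'a set)"
    and "\<forall>x::'a. open {x}"
    and "A \<noteq> {}"
  shows "M_module A =
    norm_closure UNIV UNIV (\<Union>k\<in>{1..}. extend_by_zero (nbhd k A) ` uniform_roe (nbhd k A))"
proof -
  let ?G = "{T. bounded_op UNIV UNIV T \<and> finite_dA_propagation A T}"
  let ?U = "\<Union>k\<in>{1..}. extend_by_zero (nbhd k A) ` uniform_roe (nbhd k A)"
  have U_bounded: "bounded_op UNIV UNIV S" if "S \<in> ?U" for S
    using that bounded_op_extend_by_zero unfolding uniform_roe_def norm_closure_def by blast
  have "norm_closure UNIV UNIV ?G \<subseteq> norm_closure UNIV UNIV ?U"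
  proof (rule norm_closure_subset_norm_closure)
    fix S and \<epsilon> :: real assume "S \<in> ?G" "\<epsilon> > 0"
    then obtain k R where "k \<in> {1..}" "R \<in> uniform_roe (nbhd k A)"
      and "\<forall>f\<in>ell2_on UNIV. extend_by_zero (nbhd k A) R f = S f"
      using finite_dA_propagation_eq_extend_roe[OF assms(3)] by blast
    then show "\<exists>S'\<in>?U. \<forall>f\<in>ell2_on UNIV. ell2_norm (\<lambda>y. S f y - S' f y) \<le> \<epsilon> * ell2_norm f"
      using \<open>\<epsilon> > 0\<close> by (intro bexI[of _ "extend_by_zero (nbhd k A) R"]) (auto simp: ell2_norm_nonneg)
  qed (use U_bounded in auto)
  moreover have "norm_closure UNIV UNIV ?U \<subseteq> norm_closure UNIV UNIV ?G"
  proof (rule norm_closure_subset_norm_closure)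
    fix S and \<epsilon> :: real assume "S \<in> ?U" "\<epsilon> > 0"
    then show "\<exists>S'\<in>?G. \<forall>f\<in>ell2_on UNIV. ell2_norm (\<lambda>y. S f y - S' f y) \<le> \<epsilon> * ell2_norm f"
      using extend_roe_approx_by_finite_dA_propagation[OF assms(3)] by blast
  qed (use U_bounded in auto)
  ultimately show ?thesis unfolding M_module_eq by (rule equalityI)
qed

end
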